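(* For every $\varphi\in\mathcal{L}_{\mathrm{CL}^{\mathrm{FI}}}$: $\vdash_{\mathrm{CL}^{\mathrm{FI}}}\varphi$ if and only if $\varphi$ is true at every state of every playable coalition model.
   Context: $N=\{1,\dots,n\}$ is a finite set of agents, $\mathrm{Prop}$ a countable set of atoms. $\mathcal{L}_{\mathrm{CL}}$: $\varphi ::= p\mid\neg\varphi\mid(\varphi\wedge\psi)\mid[C]\varphi$ ($C\subseteq N$); $\mathcal{L}_{\mathrm{CL}^{\mathrm{FI}}}$ additionally has the primitive $\mathrm{FI}_C(\varphi)$. Semantics: a coalition model is $\mathcal{M}=(W,E,V)$, $W$ nonempty, $E_w(C)\subseteq\mathcal{P}(W)$, $V:\mathrm{Prop}\to\mathcal{P}(W)$; Boolean clauses classical; $\mathcal{M},w\models[C]\varphi$ iff $[\![\varphi]\!]_{\mathcal{M}}=\{u\mid\mathcal{M},u\models\varphi\}\in E_w(C)$; $\mathcal{M},w\models\mathrm{FI}_C(\varphi)$ iff $[\![\varphi]\!]_{\mathcal{M}}\notin E_w(C)$ and $[\![\neg\varphi]\!]_{\mathcal{M}}\notin E_w(C)$. Playability of $E_w$: for all $C,D\subseteq N$, $X,Y\subseteq W$: $\emptyset\notin E_w(C)$; $W\in E_w(C)$; $X\in E_w(C)$, $X\subseteq Y$ imply $Y\in E_w(C)$; $C\cap D=\emptyset$, $X\in E_w(C)$, $Y\in E_w(D)$ imply $X\cap Y\in E_w(C\cup D)$; $X\notin E_w(\emptyset)$ iff $W\setminus X\in E_w(N)$; the model is playable if each $E_w$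 is. Proof system: Coalition Logic $\mathrm{CL}$ (Pauly) has all propositional tautologies; $\neg[C]\bot$; $[C]\top$; $\neg[\emptyset]\neg\varphi\to[N]\varphi$; $[C](\varphi\wedge\psi)\to[C]\varphi$; $[C_1]\varphi_1\wedge[C_2]\varphi_2\to[C_1\cup C_2](\varphi_1\wedge\varphi_2)$ for disjoint $C_1,C_2$; modus ponens; and rule RE: from $\varphi\leftrightarrow\psi$ infer $[C]\varphi\leftrightarrow[C]\psi$. $\mathrm{CL}^{\mathrm{FI}}$ is these schemes and rules over $\mathcal{L}_{\mathrm{CL}^{\mathrm{FI}}}$ plus the axiom $\mathrm{FI}_C(\varphi)\leftrightarrow(\neg[C]\varphi\wedge\neg[C]\neg\varphi)$. *)

theory Defs
  imports Main
begin

text \<open>Agents: a finite nonempty type 'a, so N = UNIV :: 'a set and coalitions are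
  arbitrary sets of type 'a set. Atoms: Prop = nat (countable).\<close>

datatype 'a fm =
    Atom nat
  | Neg "'a fm"
  | Conj "'a fm" "'a fm"
  | Eff "'a set" "'a fm"
  | FI "'a set" "'a fm"

definition Imp :: "'a fm \<Rightarrow> 'a fm \<Rightarrow> 'a fm" where
  "Imp a b = Neg (Conj a (Neg b))"

definition Iff :: "'a fm \<Rightarrow> 'a fm \<Rightarrow> 'a fm" where
  "Iff a b = Conj (Imp a b) (Imp b a)"

definition Top :: "'a fm" where
  "Top = Neg (Conj (Atom 0) (Neg (Atom 0)))"

definition Bot :: "'a fm" where
  "Bot = Neg Top"

primrec pval :: "('a fm \<Rightarrow> bool) \<Rightarrow> 'a fm \<Rightarrow> bool" where
  "pval v (Atom p) = v (Atom p)"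
| "pval v (Neg a) = (\<not> pval v a)"
| "pval v (Conj a b) = (pval v a \<and> pval v b)"
| "pval v (Eff C a) = v (Eff C a)"
| "pval v (FI C a) = v (FI C a)"

definition tautology :: "'a fm \<Rightarrow> bool" where
  "tautology \<phi> \<longleftrightarrow> (\<forall>v. pval v \<phi>)"

inductive CLFI :: "'a::finite fm \<Rightarrow> bool" where
  taut: "tautology \<phi> \<Longrightarrow> CLFI \<phi>"
| ax_bot: "CLFI (Neg (Eff C Bot))"
| ax_top: "CLFI (Eff C Top)"
| ax_N: "CLFI (Imp (Neg (Eff {} (Neg \<phi>))) (Eff UNIV \<phi>))"
| ax_mono: "CLFI (Imp (Eff C (Conj \<phi> \<psi>)) (Eff C \<phi>))"
| ax_super: "C1 \<inter> C2 = {} \<Longrightarrow>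
    CLFI (Imp (Conj (Eff C1 \<phi>1) (Eff C2 \<phi>2)) (Eff (C1 \<union> C2) (Conj \<phi>1 \<phi>2)))"
| ax_FI: "CLFI (Iff (FI C \<phi>) (Conj (Neg (Eff C \<phi>)) (Neg (Eff C (Neg \<phi>)))))"
| mp: "CLFI (Imp \<phi> \<psi>) \<Longrightarrow> CLFI \<phi> \<Longrightarrow> CLFI \<psi>"
| re: "CLFI (Iff \<phi> \<psi>) \<Longrightarrow> CLFI (Iff (Eff C \<phi>) (Eff C \<psi>))"

record ('a, 'w) cmodel =
  Wo :: "'w set"
  Ef :: "'w \<Rightarrow> 'a set \<Rightarrow> 'w set set"
  Va :: "nat \<Rightarrow> 'w set"

definition coalition_model :: "('a, 'w) cmodel \<Rightarrow> bool" where
  "coalition_model M \<longleftrightarrow> Wo M \<noteq> {}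
     \<and> (\<forall>w \<in> Wo M. \<forall>C. Ef M w C \<subseteq> Pow (Wo M))
     \<and> (\<forall>p. Va M p \<subseteq> Wo M)"

primrec sat :: "('a, 'w) cmodel \<Rightarrow> 'a fm \<Rightarrow> 'w \<Rightarrow> bool" where
  "sat M (Atom p) w = (w \<in> Va M p)"
| "sat M (Neg a) w = (\<not> sat M a w)"
| "sat M (Conj a b) w = (sat M a w \<and> sat M b w)"
| "sat M (Eff C a) w = ({u \<in> Wo M. sat M a u} \<in> Ef M w C)"
| "sat M (FI C a) w = ({u \<in> Wo M. sat M a u} \<notin> Ef M w C
                       \<and> {u \<in> Wo M. \<not> sat M a u} \<notin> Ef M w C)"

definition playable_at :: "('a, 'w) cmodel \<Rightarrow> 'w \<Rightarrow> bool" where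
  "playable_at M w \<longleftrightarrow>
     (\<forall>C. {} \<notin> Ef M w C)
   \<and> (\<forall>C. Wo M \<in> Ef M w C)
   \<and> (\<forall>C X Y. X \<subseteq> Wo M \<longrightarrow> Y \<subseteq> Wo M \<longrightarrow> X \<in> Ef M w C \<longrightarrow> X \<subseteq> Y \<longrightarrow> Y \<in> Ef M w C)
   \<and> (\<forall>C D X Y. X \<subseteq> Wo M \<longrightarrow> Y \<subseteq> Wo M \<longrightarrow> C \<inter> D = {} \<longrightarrow>
        X \<in> Ef M w C \<longrightarrow> Y \<in> Ef M w D \<longrightarrow> X \<inter> Y \<in> Ef M w (C \<union> D))
   \<and> (\<forall>X. X \<subseteq> Wo M \<longrightarrow> (X \<notin> Ef M w {} \<longleftrightarrow> Wo M - X \<in> Ef M w UNIV))"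

definition playable :: "('a, 'w) cmodel \<Rightarrow> bool" where
  "playable M \<longleftrightarrow> coalition_model M \<and> (\<forall>w \<in> Wo M. playable_at M w)"

definition valid_in :: "('a, 'w) cmodel \<Rightarrow> 'a fm \<Rightarrow> bool" where
  "valid_in M \<phi> \<longleftrightarrow> (\<forall>w \<in> Wo M. sat M \<phi> w)"

end

theory Submission
  imports Defs
begin

text \<open>Completeness uses Pauly's canonical model: the worlds are the maximal consistent sets,
  and for C \<noteq> N a set X is C-effective at w iff it contains the proof set of some \<phi> with
  [C]\<phi> \<in> w. Effectivity of the grand coalition N is instead defined from that of \<emptyset> by
  N-maximality, which makes the last playability condition hold by construction; axiom N
  together with superadditivity shows that this still agrees with [N] on proof sets. Since
  FI is axiomatised by its semantic clause, the truth lemma for FI comes for free.\<close>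

section \<open>Soundness\<close>

abbreviation truth_set :: "('a, 'w) cmodel \<Rightarrow> 'a fm \<Rightarrow> 'w set" where
  "truth_set M \<phi> \<equiv> {u \<in> Wo M. sat M \<phi> u}"

lemma sat_derived_connectives [simp]:
  "sat M Top w" "\<not> sat M Bot w"
  "sat M (Imp \<phi> \<psi>) w \<longleftrightarrow> (sat M \<phi> w \<longrightarrow> sat M \<psi> w)"
  "sat M (Iff \<phi> \<psi>) w \<longleftrightarrow> (sat M \<phi> w \<longleftrightarrow> sat M \<psi> w)"
  by (auto simp: Top_def Bot_def Imp_def Iff_def)

lemma pval_sat: "pval (\<lambda>\<psi>. sat M \<psi> w) \<phi> = sat M \<phi> w"
  by (induction \<phi>) auto

lemma
  assumes "playable M" "w \<in> Wo M"
  shows playable_empty_notin: "{} \<notin> Ef M w C"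
    and playable_Wo_in: "Wo M \<in> Ef M w C"
    and playable_mono: "X \<in> Ef M w C \<Longrightarrow> X \<subseteq> Y \<Longrightarrow> Y \<subseteq> Wo M \<Longrightarrow> Y \<in> Ef M w C"
    and playable_superadditive: "C \<inter> D = {} \<Longrightarrow> X \<in> Ef M w C \<Longrightarrow> Y \<in> Ef M w D
          \<Longrightarrow> X \<subseteq> Wo M \<Longrightarrow> Y \<subseteq> Wo M \<Longrightarrow> X \<inter> Y \<in> Ef M w (C \<union> D)"
    and playable_N_maximal: "X \<subseteq> Wo M \<Longrightarrow> X \<notin> Ef M w {} \<longleftrightarrow> Wo M - X \<in> Ef M w UNIV"
  using assms unfolding playable_def playable_at_def by (meson order_trans)+

theorem soundness:
  assumes "CLFI \<phi>" and M: "playable M"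
  shows "valid_in M \<phi>"
  using assms(1) unfolding valid_in_def
proof (induction rule: CLFI.induct)
  case (taut \<phi>)
  then show ?case using pval_sat unfolding tautology_def by metis
next
  case ax_bot
  show ?case using playable_empty_notin[OF M] by simp
next
  case ax_top
  show ?case using playable_Wo_in[OF M] by simp
next
  case (ax_N \<phi>)
  have "Wo M - truth_set M (Neg \<phi>) = truth_set M \<phi>" by auto
  then show ?case using playable_N_maximal[OF M, of _ "truth_set M (Neg \<phi>)"] by auto
next
  case (ax_mono C \<phi> \<psi>)
  show ?case using playable_mono[OF M, of _ "truth_set M (Conj \<phi> \<psi>)" C "truth_set M \<phi>"] by auto
next
  case (ax_super C1 C2 \<phi>1 \<phi>2)
  have "truth_set M (Conj \<phi>1 \<phi>2) = truth_set M \<phi>1 \<inter> truth_set M \<phi>2" by auto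
  with ax_super show ?case
    using playable_superadditive[OF M, of _ C1 C2 "truth_set M \<phi>1" "truth_set M \<phi>2"] by auto
next
  case (ax_FI C \<phi>)
  show ?case by simp
next
  case (mp \<phi> \<psi>)
  then show ?case by simp
next
  case (re \<phi> \<psi> C)
  then have "truth_set M \<phi> = truth_set M \<psi>" by auto
  then show ?case by simp
qed

section \<open>Maximal consistent sets\<close>

primrec conjL :: "'a fm list \<Rightarrow> 'a fm" where
  "conjL [] = Top"
| "conjL (\<phi> # \<phi>s) = Conj \<phi> (conjL \<phi>s)"

lemma pval_derived_connectives [simp]:
  "pval v Top" "\<not> pval v Bot"
  "pval v (Imp \<phi> \<psi>) \<longleftrightarrow> (pval v \<phi> \<longrightarrow> pval v \<psi>)"
  "pval v (Iff \<phi> \<psi>) \<longleftrightarrow> (pval v \<phi> \<longleftrightarrow> pval v \<psi>)"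
  by (auto simp: Top_def Bot_def Imp_def Iff_def)

lemma pval_conjL [simp]: "pval v (conjL \<phi>s) \<longleftrightarrow> (\<forall>\<phi>\<in>set \<phi>s. pval v \<phi>)"
  by (induction \<phi>s) auto

lemma CLFI_taut_mp: "CLFI \<phi> \<Longrightarrow> tautology (Imp \<phi> \<psi>) \<Longrightarrow> CLFI \<psi>"
  using CLFI.taut CLFI.mp by blast

lemma CLFI_taut_mp2: "CLFI \<phi> \<Longrightarrow> CLFI \<psi> \<Longrightarrow> tautology (Imp \<phi> (Imp \<psi> \<chi>)) \<Longrightarrow> CLFI \<chi>"
  using CLFI.taut CLFI.mp by blast

lemma CLFI_Top: "CLFI Top"
  by (rule CLFI.taut) (simp add: tautology_def)

definition consistent :: "'a::finite fm set \<Rightarrow> bool" where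
  "consistent S \<longleftrightarrow> (\<forall>\<phi>s. set \<phi>s \<subseteq> S \<longrightarrow> \<not> CLFI (Neg (conjL \<phi>s)))"

definition mcs :: "'a::finite fm set \<Rightarrow> bool" where
  "mcs S \<longleftrightarrow> consistent S \<and> (\<forall>\<phi>. \<phi> \<notin> S \<longrightarrow> \<not> consistent (insert \<phi> S))"

lemma inconsistent_insertD:
  assumes "\<not> consistent (insert \<phi> S)"
  obtains \<psi>s where "set \<psi>s \<subseteq> S" "CLFI (Imp (conjL \<psi>s) (Neg \<phi>))"
proof -
  obtain \<phi>s where \<phi>s: "set \<phi>s \<subseteq> insert \<phi> S" "CLFI (Neg (conjL \<phi>s))"
    using assms unfolding consistent_def by blast
  let ?\<psi>s = "filter (\<lambda>\<chi>. \<chi> \<noteq> \<phi>) \<phi>s"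
  have "tautology (Imp (Neg (conjL \<phi>s)) (Imp (conjL ?\<psi>s) (Neg \<phi>)))"
    unfolding tautology_def by auto
  then have "CLFI (Imp (conjL ?\<psi>s) (Neg \<phi>))" using CLFI_taut_mp[OF \<phi>s(2)] by blast
  moreover have "set ?\<psi>s \<subseteq> S" using \<phi>s(1) by auto
  ultimately show thesis using that by blast
qed

lemma mcs_derive:
  assumes S: "mcs S" and "set \<phi>s \<subseteq> S" and "CLFI (Imp (conjL \<phi>s) \<psi>)"
  shows "\<psi> \<in> S"
proof (rule ccontr)
  assume "\<psi> \<notin> S"
  then obtain \<chi>s where \<chi>s: "set \<chi>s \<subseteq> S" "CLFI (Imp (conjL \<chi>s) (Neg \<psi>))"
    using S inconsistent_insertD unfolding mcs_def by metis
  have "CLFI (Neg (conjL (\<phi>s @ \<chi>s)))"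
    by (rule CLFI_taut_mp2[OF assms(3) \<chi>s(2)]) (auto simp: tautology_def)
  with S \<chi>s(1) assms(2) show False unfolding mcs_def consistent_def by auto
qed

lemma mcs_thm: "mcs S \<Longrightarrow> CLFI \<phi> \<Longrightarrow> \<phi> \<in> S"
  using mcs_derive[of S "[]" \<phi>] CLFI_taut_mp[of \<phi> "Imp Top \<phi>"] by (simp add: tautology_def)

lemma mcs_mp: "mcs S \<Longrightarrow> CLFI (Imp \<phi> \<psi>) \<Longrightarrow> \<phi> \<in> S \<Longrightarrow> \<psi> \<in> S"
  using mcs_derive[of S "[\<phi>]" \<psi>] CLFI_taut_mp[of "Imp \<phi> \<psi>" "Imp (Conj \<phi> Top) \<psi>"]
  by (simp add: tautology_def)

lemma mcs_Neg:
  assumes S: "mcs S"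
  shows "Neg \<phi> \<in> S \<longleftrightarrow> \<phi> \<notin> S"
proof (intro iffI notI)
  assume "Neg \<phi> \<in> S" "\<phi> \<in> S"
  then have "set [\<phi>, Neg \<phi>] \<subseteq> S" by simp
  moreover have "CLFI (Neg (conjL [\<phi>, Neg \<phi>]))"
    by (rule CLFI.taut) (simp add: tautology_def)
  ultimately show False using S unfolding mcs_def consistent_def by blast
next
  assume "\<phi> \<notin> S"
  then obtain \<psi>s where "set \<psi>s \<subseteq> S" "CLFI (Imp (conjL \<psi>s) (Neg \<phi>))"
    using S inconsistent_insertD unfolding mcs_def by metis
  then show "Neg \<phi> \<in> S" by (rule mcs_derive[OF S])
qed

lemma mcs_Conj:
  assumes S: "mcs S"
  shows "Conj \<phi> \<psi> \<in> S \<longleftrightarrow> \<phi> \<in> S \<and> \<psi> \<in> S"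
proof
  assume "Conj \<phi> \<psi> \<in> S"
  then have "set [Conj \<phi> \<psi>] \<subseteq> S" by simp
  moreover have "CLFI (Imp (conjL [Conj \<phi> \<psi>]) \<phi>)" "CLFI (Imp (conjL [Conj \<phi> \<psi>]) \<psi>)"
    by (rule CLFI.taut, simp add: tautology_def)+
  ultimately show "\<phi> \<in> S \<and> \<psi> \<in> S" using mcs_derive[OF S] by blast
next
  assume "\<phi> \<in> S \<and> \<psi> \<in> S"
  then have "set [\<phi>, \<psi>] \<subseteq> S" by simp
  moreover have "CLFI (Imp (conjL [\<phi>, \<psi>]) (Conj \<phi> \<psi>))"
    by (rule CLFI.taut) (simp add: tautology_def)
  ultimately show "Conj \<phi> \<psi> \<in> S" by (rule mcs_derive[OF S])
qed

lemma lindenbaum: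
  assumes "consistent S"
  obtains M where "S \<subseteq> M" "mcs M"
proof -
  let ?A = "{T. S \<subseteq> T \<and> consistent T}"
  have "\<exists>M\<in>?A. \<forall>T\<in>?A. M \<subseteq> T \<longrightarrow> T = M"
  proof (rule subset_Zorn_nonempty)
    show "?A \<noteq> {}" using assms by blast
  next
    fix \<C> assume ne: "\<C> \<noteq> {}" and chain: "subset.chain ?A \<C>"
    then have sub: "\<C> \<subseteq> ?A" unfolding subset.chain_def by blast
    have "consistent (\<Union>\<C>)"
      unfolding consistent_def
    proof (intro allI impI)
      fix \<phi>s assume "set \<phi>s \<subseteq> \<Union>\<C>"
      then obtain T where "T \<in> \<C>" "set \<phi>s \<subseteq> T"
        using finite_subset_Union_chain[OF finite_set _ ne chain] by blast
      with sub show "\<not> CLFI (Neg (conjL \<phi>s))"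
        unfolding consistent_def by blast
    qed
    moreover have "S \<subseteq> \<Union>\<C>" using ne sub by blast
    ultimately show "\<Union>\<C> \<in> ?A" by blast
  qed
  then obtain M where "M \<in> ?A" and maximal: "\<forall>T\<in>?A. M \<subseteq> T \<longrightarrow> T = M"
    by (elim bexE)
  then have M: "S \<subseteq> M" "consistent M" by simp_all
  have "\<not> consistent (insert \<phi> M)" if "\<phi> \<notin> M" for \<phi>
  proof
    assume "consistent (insert \<phi> M)"
    with M(1) have "insert \<phi> M \<in> ?A" by blast
    with maximal have "insert \<phi> M = M" by blast
    with that show False by blast
  qed
  with M show thesis using that unfolding mcs_def by blast
qed

lemma exists_mcs_separating:
  assumes "\<not> CLFI (Imp \<psi> \<phi>)"
  obtains S where "mcs S" "\<psi> \<in> S" "\<phi> \<notin> S"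
proof -
  have "consistent {\<psi>, Neg \<phi>}"
    unfolding consistent_def
  proof (intro allI impI notI)
    fix \<chi>s assume "set \<chi>s \<subseteq> {\<psi>, Neg \<phi>}" "CLFI (Neg (conjL \<chi>s))"
    then have "tautology (Imp (Neg (conjL \<chi>s)) (Imp \<psi> \<phi>))"
      unfolding tautology_def by auto
    with assms \<open>CLFI (Neg (conjL \<chi>s))\<close> show False using CLFI_taut_mp by blast
  qed
  then show thesis using lindenbaum mcs_Neg that by (metis insert_subset)
qed

lemma CLFI_Eff_mono:
  assumes "CLFI (Imp \<phi> \<psi>)"
  shows "CLFI (Imp (Eff C \<phi>) (Eff C \<psi>))"
proof -
  have "CLFI (Iff \<phi> (Conj \<psi> \<phi>))"
    by (rule CLFI_taut_mp[OF assms]) (auto simp: tautology_def)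
  then have "CLFI (Iff (Eff C \<phi>) (Eff C (Conj \<psi> \<phi>)))" by (rule CLFI.re)
  then show ?thesis
    by (rule CLFI_taut_mp2[OF _ CLFI.ax_mono]) (auto simp: tautology_def)
qed

context
  fixes w :: "'a::finite fm set"
  assumes w: "mcs w"
begin

lemma mcs_Eff_mono: "Eff C \<phi> \<in> w \<Longrightarrow> CLFI (Imp \<phi> \<psi>) \<Longrightarrow> Eff C \<psi> \<in> w"
  using mcs_mp[OF w] CLFI_Eff_mono by blast

lemma mcs_Eff_Bot: "Eff C Bot \<notin> w"
  using mcs_thm[OF w CLFI.ax_bot] mcs_Neg[OF w] by blast

lemma mcs_Eff_Top: "Eff C Top \<in> w"
  using mcs_thm[OF w CLFI.ax_top] .

lemma mcs_Eff_super:
  "C \<inter> D = {} \<Longrightarrow> Eff C \<phi> \<in> w \<Longrightarrow> Eff D \<psi> \<in> w \<Longrightarrow> Eff (C \<union> D) (Conj \<phi> \<psi>) \<in> w"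
  using mcs_mp[OF w CLFI.ax_super] mcs_Conj[OF w] by blast

lemma mcs_Eff_N: "Eff {} (Neg \<phi>) \<notin> w \<Longrightarrow> Eff UNIV \<phi> \<in> w"
  using mcs_mp[OF w CLFI.ax_N] mcs_Neg[OF w] by blast

lemma mcs_FI: "FI C \<phi> \<in> w \<longleftrightarrow> Eff C \<phi> \<notin> w \<and> Eff C (Neg \<phi>) \<notin> w"
proof -
  let ?\<chi> = "Conj (Neg (Eff C \<phi>)) (Neg (Eff C (Neg \<phi>)))"
  have "CLFI (Imp (FI C \<phi>) ?\<chi>)" "CLFI (Imp ?\<chi> (FI C \<phi>))"
    by (rule CLFI_taut_mp[OF CLFI.ax_FI], auto simp: tautology_def)+
  then show ?thesis using mcs_mp[OF w] mcs_Conj[OF w] mcs_Neg[OF w] by blast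
qed

end

section \<open>The canonical model\<close>

definition canon_worlds :: "'a::finite fm set set" where
  "canon_worlds = {S. mcs S}"

definition proof_set :: "'a::finite fm \<Rightarrow> 'a fm set set" where
  "proof_set \<phi> = {w \<in> canon_worlds. \<phi> \<in> w}"

definition canon_eff_base :: "'a::finite fm set \<Rightarrow> 'a set \<Rightarrow> 'a fm set set set" where
  "canon_eff_base w C =
     {X. X \<subseteq> canon_worlds \<and> (\<exists>\<phi>. proof_set \<phi> \<subseteq> X \<and> Eff C \<phi> \<in> w)}"

definition canon_eff :: "'a::finite fm set \<Rightarrow> 'a set \<Rightarrow> 'a fm set set set" where
  "canon_eff w C =
     (if C = UNIV then {X. X \<subseteq> canon_worlds \<and> canon_worlds - X \<notin> canon_eff_base w {}}
      else canon_eff_base w C)"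

definition canon :: "('a::finite, 'a fm set) cmodel" where
  "canon = \<lparr>Wo = canon_worlds, Ef = canon_eff, Va = (\<lambda>p. proof_set (Atom p))\<rparr>"

lemma proof_set_subset_canon_worlds: "proof_set \<phi> \<subseteq> canon_worlds"
  unfolding proof_set_def by blast

lemma CLFI_Imp_if_proof_set_subset: "proof_set \<psi> \<subseteq> proof_set \<phi> \<Longrightarrow> CLFI (Imp \<psi> \<phi>)"
  using exists_mcs_separating unfolding proof_set_def canon_worlds_def by blast

lemma proof_set_Neg: "proof_set (Neg \<phi>) = canon_worlds - proof_set \<phi>"
  unfolding proof_set_def canon_worlds_def using mcs_Neg by auto

lemma proof_set_Conj: "proof_set (Conj \<phi> \<psi>) = proof_set \<phi> \<inter> proof_set \<psi>"
  unfolding proof_set_def canon_worlds_def using mcs_Conj by auto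

lemma proof_set_Top: "proof_set Top = canon_worlds"
  unfolding proof_set_def canon_worlds_def using mcs_thm[OF _ CLFI_Top] by auto

context
  fixes w :: "'a::finite fm set"
  assumes w: "w \<in> canon_worlds"
begin

lemma mcs_world: "mcs w"
  using w unfolding canon_worlds_def by simp

lemma proof_set_in_canon_eff_base: "proof_set \<phi> \<in> canon_eff_base w C \<longleftrightarrow> Eff C \<phi> \<in> w"
  unfolding canon_eff_base_def
  using proof_set_subset_canon_worlds CLFI_Imp_if_proof_set_subset mcs_Eff_mono[OF mcs_world]
  by blast

lemma canon_eff_base_mono:
  "X \<in> canon_eff_base w C \<Longrightarrow> X \<subseteq> Y \<Longrightarrow> Y \<subseteq> canon_worlds \<Longrightarrow> Y \<in> canon_eff_base w C"
  unfolding canon_eff_base_def by blast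

lemma canon_eff_base_super:
  assumes "C \<inter> D = {}" "X \<in> canon_eff_base w C" "Y \<in> canon_eff_base w D"
  shows "X \<inter> Y \<in> canon_eff_base w (C \<union> D)"
proof -
  obtain \<phi> \<psi> where \<phi>: "proof_set \<phi> \<subseteq> X" "Eff C \<phi> \<in> w"
    and \<psi>: "proof_set \<psi> \<subseteq> Y" "Eff D \<psi> \<in> w"
    using assms(2,3) unfolding canon_eff_base_def by blast
  have "proof_set (Conj \<phi> \<psi>) \<subseteq> X \<inter> Y"
    using \<phi>(1) \<psi>(1) unfolding proof_set_Conj by blast
  moreover have "Eff (C \<union> D) (Conj \<phi> \<psi>) \<in> w"
    using mcs_Eff_super[OF mcs_world assms(1) \<phi>(2) \<psi>(2)] .
  moreover have "X \<inter> Y \<subseteq> canon_worlds"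
    using assms(2) unfolding canon_eff_base_def by blast
  ultimately show ?thesis unfolding canon_eff_base_def by blast
qed

lemma empty_notin_canon_eff_base: "{} \<notin> canon_eff_base w C"
proof
  assume "{} \<in> canon_eff_base w C"
  then obtain \<phi> where "proof_set \<phi> \<subseteq> {}" "Eff C \<phi> \<in> w"
    unfolding canon_eff_base_def by blast
  then have "Eff C Bot \<in> w"
    using CLFI_Imp_if_proof_set_subset[of \<phi> Bot] mcs_Eff_mono[OF mcs_world] by blast
  then show False using mcs_Eff_Bot[OF mcs_world] by blast
qed

lemma canon_worlds_in_canon_eff_base: "canon_worlds \<in> canon_eff_base w C"
  using proof_set_in_canon_eff_base[of Top C] mcs_Eff_Top[OF mcs_world, of C]
  unfolding proof_set_Top by blast

lemma canon_eff_UNIV: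
  "canon_eff w UNIV = {X. X \<subseteq> canon_worlds \<and> canon_worlds - X \<notin> canon_eff_base w {}}"
  unfolding canon_eff_def by simp

lemma canon_eff_not_UNIV: "C \<noteq> UNIV \<Longrightarrow> canon_eff w C = canon_eff_base w C"
  unfolding canon_eff_def by simp

lemma canon_eff_base_subset: "canon_eff_base w C \<subseteq> canon_eff w C"
proof (cases "C = UNIV")
  case True
  have "X \<in> canon_eff w UNIV" if X: "X \<in> canon_eff_base w UNIV" for X
  proof -
    have "canon_worlds - X \<notin> canon_eff_base w {}"
    proof
      assume "canon_worlds - X \<in> canon_eff_base w {}"
      with X have "(canon_worlds - X) \<inter> X \<in> canon_eff_base w ({} \<union> UNIV)"
        by (intro canon_eff_base_super) auto
      moreover have "(canon_worlds - X) \<inter> X = {}" by blast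
      ultimately show False using empty_notin_canon_eff_base by simp
    qed
    moreover have "X \<subseteq> canon_worlds" using X unfolding canon_eff_base_def by blast
    ultimately show ?thesis unfolding canon_eff_UNIV by blast
  qed
  with True show ?thesis by blast
qed (simp add: canon_eff_not_UNIV)

lemma proof_set_in_canon_eff: "proof_set \<phi> \<in> canon_eff w C \<longleftrightarrow> Eff C \<phi> \<in> w"
proof (cases "C = UNIV")
  case True
  have "proof_set \<phi> \<in> canon_eff w UNIV \<Longrightarrow> Eff UNIV \<phi> \<in> w"
    using mcs_Eff_N[OF mcs_world] proof_set_in_canon_eff_base[of "Neg \<phi>"]
    unfolding canon_eff_UNIV proof_set_Neg by blast
  with True show ?thesis
    using canon_eff_base_subset proof_set_in_canon_eff_base by blast
qed (simp add: canon_eff_not_UNIV proof_set_in_canon_eff_base)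

lemma empty_notin_canon_eff: "{} \<notin> canon_eff w C"
  using empty_notin_canon_eff_base canon_worlds_in_canon_eff_base
  by (simp add: canon_eff_def)

lemma canon_worlds_in_canon_eff: "canon_worlds \<in> canon_eff w C"
  using canon_eff_base_subset canon_worlds_in_canon_eff_base by blast

lemma canon_eff_mono:
  "X \<in> canon_eff w C \<Longrightarrow> X \<subseteq> Y \<Longrightarrow> Y \<subseteq> canon_worlds \<Longrightarrow> Y \<in> canon_eff w C"
  using canon_eff_base_mono[of "canon_worlds - Y" "{}" "canon_worlds - X"]
    canon_eff_base_mono[of X C Y]
  by (cases "C = UNIV") (auto simp: canon_eff_UNIV canon_eff_not_UNIV)

lemma canon_eff_UNIV_super:
  assumes X: "X \<in> canon_eff w UNIV" and Y: "Y \<in> canon_eff_base w {}"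
  shows "X \<inter> Y \<in> canon_eff w UNIV"
proof -
  have "canon_worlds - (X \<inter> Y) \<notin> canon_eff_base w {}"
  proof
    assume "canon_worlds - (X \<inter> Y) \<in> canon_eff_base w {}"
    with Y have "(canon_worlds - (X \<inter> Y)) \<inter> Y \<in> canon_eff_base w {}"
      using canon_eff_base_super[of "{}" "{}"] by fastforce
    then have "canon_worlds - X \<in> canon_eff_base w {}"
      by (rule canon_eff_base_mono) auto
    with X show False unfolding canon_eff_UNIV by blast
  qed
  with X show ?thesis unfolding canon_eff_UNIV by blast
qed

lemma canon_eff_super:
  assumes "C \<inter> D = {}" "X \<in> canon_eff w C" "Y \<in> canon_eff w D"
  shows "X \<inter> Y \<in> canon_eff w (C \<union> D)"
proof -
  consider "C = UNIV" "D = {}" | "C = {}" "D = UNIV" | "C \<noteq> UNIV" "D \<noteq> UNIV"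
    using assms(1) by blast
  then show ?thesis
  proof cases
    case 1
    then show ?thesis using assms canon_eff_UNIV_super canon_eff_not_UNIV by simp
  next
    case 2
    then show ?thesis
      using assms canon_eff_UNIV_super[of Y X] canon_eff_not_UNIV by (simp add: Int_commute)
  next
    case 3
    then show ?thesis
      using assms canon_eff_base_super canon_eff_base_subset canon_eff_not_UNIV by blast
  qed
qed

lemma canon_eff_N_maximal:
  "X \<subseteq> canon_worlds \<Longrightarrow> X \<notin> canon_eff w {} \<longleftrightarrow> canon_worlds - X \<in> canon_eff w UNIV"
  by (simp add: canon_eff_UNIV canon_eff_not_UNIV double_diff)

lemma playable_at_canon: "playable_at canon w"
  unfolding playable_at_def canon_def cmodel.select_convs
proof (intro conjI allI impI)
  fix C X Y
  show "{} \<notin> canon_eff w C" by (rule empty_notin_canon_eff)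
  show "canon_worlds \<in> canon_eff w C" by (rule canon_worlds_in_canon_eff)
  show "X \<in> canon_eff w C \<Longrightarrow> X \<subseteq> Y \<Longrightarrow> Y \<in> canon_eff w C" if "Y \<subseteq> canon_worlds"
    using canon_eff_mono that by blast
  show "X \<notin> canon_eff w {} \<longleftrightarrow> canon_worlds - X \<in> canon_eff w UNIV" if "X \<subseteq> canon_worlds"
    using canon_eff_N_maximal that .
next
  fix C D X Y
  assume "C \<inter> D = {}" "X \<in> canon_eff w C" "Y \<in> canon_eff w D"
  then show "X \<inter> Y \<in> canon_eff w (C \<union> D)" by (rule canon_eff_super)
qed

end

lemma truth_lemma:
  assumes "w \<in> canon_worlds"
  shows "sat canon \<phi> w \<longleftrightarrow> \<phi> \<in> w"
  using assms
proof (induction \<phi> arbitrary: w)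
  case (Atom p)
  then show ?case by (simp add: canon_def proof_set_def)
next
  case (Neg \<phi>)
  then show ?case using mcs_Neg[OF mcs_world[OF Neg.prems]] by simp
next
  case (Conj \<phi> \<psi>)
  then show ?case using mcs_Conj[OF mcs_world[OF Conj.prems]] by simp
next
  case (Eff C \<phi>)
  have "truth_set canon \<phi> = proof_set \<phi>"
    using Eff.IH by (auto simp: canon_def proof_set_def)
  then show ?case using proof_set_in_canon_eff[OF Eff.prems] by (simp add: canon_def)
next
  case (FI C \<phi>)
  have ext: "truth_set canon \<phi> = proof_set \<phi>"
    using FI.IH by (auto simp: canon_def proof_set_def)
  moreover have "{u \<in> Wo canon. \<not> sat canon \<phi> u} = proof_set (Neg \<phi>)"
    unfolding proof_set_Neg ext[symmetric] by (auto simp: canon_def)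
  ultimately show ?case
    using proof_set_in_canon_eff[OF FI.prems] mcs_FI[OF mcs_world[OF FI.prems]]
    by (simp add: canon_def)
qed

lemma playable_canon:
  assumes "canon_worlds \<noteq> ({} :: 'a::finite fm set set)"
  shows "playable (canon :: ('a, 'a fm set) cmodel)"
  using assms playable_at_canon proof_set_subset_canon_worlds
  unfolding playable_def coalition_model_def
  by (auto simp: canon_def canon_eff_def canon_eff_base_def)

theorem completeness:
  assumes "\<forall>M :: ('a::finite, 'a fm set) cmodel. playable M \<longrightarrow> valid_in M \<phi>"
  shows "CLFI \<phi>"
proof (rule ccontr)
  assume "\<not> CLFI \<phi>"
  then have "\<not> CLFI (Imp Top \<phi>)" using CLFI.mp CLFI_Top by blast
  then obtain w where "mcs w" "\<phi> \<notin> w" using exists_mcs_separating by blast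
  then have w: "w \<in> canon_worlds" "\<not> sat canon \<phi> w"
    using truth_lemma unfolding canon_worlds_def by auto
  then have "playable (canon :: ('a, 'a fm set) cmodel)" using playable_canon by blast
  with assms w show False unfolding valid_in_def canon_def by auto
qed

theorem mainTheorem18:
  fixes \<phi> :: "'a::finite fm"
  shows "(CLFI \<phi> \<longrightarrow> (\<forall>M :: ('a, 'w) cmodel. playable M \<longrightarrow> valid_in M \<phi>))
       \<and> ((\<forall>M :: ('a, 'a fm set) cmodel. playable M \<longrightarrow> valid_in M \<phi>) \<longrightarrow> CLFI \<phi>)"
  using soundness completeness by blast

end
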